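(* With $f$ as in the context (and $n\ge 3$), every $g\in G$ satisfies $\langle v_0\rangle g=\langle v_0\rangle$.
   Context: Let $p$ be a prime, $\mathbb{F}=\mathrm{GF}(p)$, and $n\ge 3$. Let $V$ be an $\mathbb{F}$-vector space with basis $v_0,\dots,v_n$, $U=\langle v_1,\dots,v_n\rangle$, $W=\Lambda^2V$. Maps are written on the right. For $g\in\mathrm{End}(V)$, $\widehat g$ denotes the induced linear map of $W$, $(x\wedge y)\widehat g=(xg)\wedge(yg)$. The linear map $f:V\to W$ is given by $v_0f=\sum_{i=1}^n b_i\, v_0\wedge v_i+\sum_{1\le j<k\le n}c_{j,k}\, v_j\wedge v_k$ and $v_if=\sum_{j=1}^n A_{i,j}\, v_0\wedge v_j$ for $1\le i\le n$, where $b\in\mathbb{F}^n$ and $c=(c_{j,k})\in\mathbb{F}^{\binom n2}$ are nonzero, and $A$ is the $n\times n$ companion matrix of the minimal polynomial over $\mathbb{F}$ of a primitive element of $\mathrm{GF}(p^n)$. Let $G=\{g\in \mathrm{GL}(V) : (vg)f=(vf)\widehat{g}\ \text{for all } v\in V\}$. *)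

theory Defs
  imports "HOL-Computational_Algebra.Polynomial" "HOL-Library.Cardinality"
begin

text \<open>V = F^(n+1) with standard basis v_0,...,v_n: a vector is a function
  nat => F vanishing outside {0..n}. Endomorphisms of V are (n+1)x(n+1) matrices
  M :: nat => nat => F (entries outside {0..n} are irrelevant), acting on row vectors on
  the right, so row i of M is the image of v_i. An element of W = Lambda^2 V is represented
  by its coordinate function w, where w a b (a < b <= n) is the coefficient of v_a wedge v_b,
  and w a b = 0 otherwise.\<close>

definition vspace :: "nat \<Rightarrow> (nat \<Rightarrow> 'a::zero) set" where
  "vspace n = {x. \<forall>i>n. x i = 0}"

definition vecmat :: "nat \<Rightarrow> (nat \<Rightarrow> 'a::comm_ring_1) \<Rightarrow> (nat \<Rightarrow> nat \<Rightarrow> 'a) \<Rightarrow> (nat \<Rightarrow> 'a)" where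
  "vecmat n x M = (\<lambda>j. if j \<le> n then (\<Sum>i\<le>n. x i * M i j) else 0)"

definition matmul :: "nat \<Rightarrow> (nat \<Rightarrow> nat \<Rightarrow> 'a::comm_ring_1) \<Rightarrow> (nat \<Rightarrow> nat \<Rightarrow> 'a) \<Rightarrow> (nat \<Rightarrow> nat \<Rightarrow> 'a)" where
  "matmul n M N = (\<lambda>i k. \<Sum>j\<le>n. M i j * N j k)"

definition is_GL :: "nat \<Rightarrow> (nat \<Rightarrow> nat \<Rightarrow> 'a::comm_ring_1) \<Rightarrow> bool" where
  "is_GL n M = (\<exists>N. \<forall>i\<le>n. \<forall>k\<le>n.
      matmul n M N i k = (if i = k then 1 else 0) \<and> matmul n N M i k = (if i = k then 1 else 0))"

definition wedge :: "nat \<Rightarrow> (nat \<Rightarrow> 'a::comm_ring_1) \<Rightarrow> (nat \<Rightarrow> 'a) \<Rightarrow> (nat \<Rightarrow> nat \<Rightarrow> 'a)" where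
  "wedge n x y = (\<lambda>a b. if a < b \<and> b \<le> n then x a * y b - x b * y a else 0)"

definition hat :: "nat \<Rightarrow> (nat \<Rightarrow> nat \<Rightarrow> 'a::comm_ring_1) \<Rightarrow> (nat \<Rightarrow> nat \<Rightarrow> 'a) \<Rightarrow> (nat \<Rightarrow> nat \<Rightarrow> 'a)" where
  "hat n M w = (\<lambda>a b. \<Sum>j\<le>n. \<Sum>k\<in>{j<..n}. w j k * wedge n (M j) (M k) a b)"

text \<open>Images of the basis vectors under f:
  v_0 f = sum_i b_i v_0 wedge v_i + sum_{1<=j<k<=n} c_{j,k} v_j wedge v_k,
  v_i f = sum_j A_{i,j} v_0 wedge v_j  (1 <= i <= n).\<close>
definition f_basis :: "nat \<Rightarrow> (nat \<Rightarrow> 'a::comm_ring_1) \<Rightarrow> (nat \<Rightarrow> nat \<Rightarrow> 'a) \<Rightarrow> (nat \<Rightarrow> nat \<Rightarrow> 'a)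
    \<Rightarrow> nat \<Rightarrow> (nat \<Rightarrow> nat \<Rightarrow> 'a)" where
  "f_basis n b c A i = (\<lambda>j k. if j < k \<and> k \<le> n then
      (if i = 0 then (if j = 0 then b k else c j k) else (if j = 0 then A i k else 0)) else 0)"

definition fmap :: "nat \<Rightarrow> (nat \<Rightarrow> 'a::comm_ring_1) \<Rightarrow> (nat \<Rightarrow> nat \<Rightarrow> 'a) \<Rightarrow> (nat \<Rightarrow> nat \<Rightarrow> 'a)
    \<Rightarrow> (nat \<Rightarrow> 'a) \<Rightarrow> (nat \<Rightarrow> nat \<Rightarrow> 'a)" where
  "fmap n b c A x = (\<lambda>j k. \<Sum>i\<le>n. x i * f_basis n b c A i j k)"

definition stabG :: "nat \<Rightarrow> (nat \<Rightarrow> 'a::comm_ring_1) \<Rightarrow> (nat \<Rightarrow> nat \<Rightarrow> 'a) \<Rightarrow> (nat \<Rightarrow> nat \<Rightarrow> 'a)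
    \<Rightarrow> (nat \<Rightarrow> nat \<Rightarrow> 'a) set" where
  "stabG n b c A = {M. is_GL n M \<and>
      (\<forall>x\<in>vspace n. fmap n b c A (vecmat n x M) = hat n M (fmap n b c A x))}"

text \<open>Companion matrix (indices 1..n) of a monic polynomial q of degree n, for row vectors
  acting on the right: v_i A = v_(i+1) for i < n, v_n A = - sum_j coeff q (j-1) v_j.\<close>
definition companion :: "nat \<Rightarrow> 'a::comm_ring_1 poly \<Rightarrow> (nat \<Rightarrow> nat \<Rightarrow> 'a)" where
  "companion n q = (\<lambda>i j. if 1 \<le> i \<and> i \<le> n \<and> 1 \<le> j \<and> j \<le> n then
      (if i < n then (if j = i + 1 then 1 else 0) else - coeff q (j - 1)) else 0)"

definition is_ring_hom :: "('a::ring_1 \<Rightarrow> 'b::ring_1) \<Rightarrow> bool" where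
  "is_ring_hom \<phi> = (\<phi> 1 = 1 \<and> (\<forall>x y. \<phi> (x + y) = \<phi> x + \<phi> y) \<and> (\<forall>x y. \<phi> (x * y) = \<phi> x * \<phi> y))"

definition primitive_elem :: "'b::field \<Rightarrow> bool" where
  "primitive_elem \<alpha> = (\<forall>y. y \<noteq> 0 \<longrightarrow> (\<exists>k. y = \<alpha> ^ k))"

definition is_minpoly :: "('a::field \<Rightarrow> 'b::field) \<Rightarrow> 'b \<Rightarrow> 'a poly \<Rightarrow> bool" where
  "is_minpoly \<phi> \<alpha> q = (lead_coeff q = 1 \<and> poly (map_poly \<phi> q) \<alpha> = 0 \<and>
      (\<forall>r. r \<noteq> 0 \<and> poly (map_poly \<phi> r) \<alpha> = 0 \<longrightarrow> degree q \<le> degree r))"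

definition line0 :: "'a::zero \<Rightarrow> nat \<Rightarrow> 'a" where
  "line0 t = (\<lambda>i. if i = 0 then t else 0)"

end

theory Submission
  imports Defs
begin

text \<open>
  Let g \<in> G and write A for the companion matrix. For u \<in> U we have uf = v_0 \<wedge> uA, so
  if also ug \<in> U the defining relation of G reads  v_0 \<wedge> (ug)A = (v_0 g) \<wedge> (uA)g.
  Suppose v_0 g had a nonzero coordinate at some v_m with m \<ge> 1. Comparing coordinates
  of the two wedges then forces (ug)A to be a multiple of v_0 g on U. But u \<mapsto> (ug)A is
  injective, because g is invertible and A is invertible (the minimal polynomial of a
  primitive element of a field with more than two elements has nonzero constant term).
  Hence U' = {u \<in> U. ug \<in> U} has dimension at most one. Yet U' contains the kernel of a
  linear form on \<langle>v_1,v_2,v_3\<rangle>, which has dimension at least two since n \<ge> 3.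
  So v_0 g \<in> \<langle>v_0\<rangle>, and invertibility of g gives \<langle>v_0\<rangle>g = \<langle>v_0\<rangle>.
\<close>

subsection \<open>Row vectors and invertible matrices\<close>

lemma vecmat_lincomb:
  "vecmat n (\<lambda>i. a * x i - b * y i) M = (\<lambda>j. a * vecmat n x M j - b * vecmat n y M j)"
  unfolding vecmat_def by (rule ext) (simp add: sum_subtractf sum_distrib_left algebra_simps)

lemma vecmat_matmul:
  assumes "j \<le> n"
  shows "(\<Sum>l\<le>n. vecmat n x M l * N l j) = (\<Sum>i\<le>n. x i * matmul n M N i j)"
proof -
  have "(\<Sum>l\<le>n. vecmat n x M l * N l j) = (\<Sum>l\<le>n. \<Sum>i\<le>n. x i * M i l * N l j)"
    by (intro sum.cong) (auto simp: vecmat_def sum_distrib_right)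
  also have "\<dots> = (\<Sum>i\<le>n. \<Sum>l\<le>n. x i * M i l * N l j)" by (rule sum.swap)
  also have "\<dots> = (\<Sum>i\<le>n. x i * matmul n M N i j)"
    by (simp add: matmul_def sum_distrib_left mult.assoc)
  finally show ?thesis .
qed

lemma vecmat_injective:
  assumes inv: "\<And>i k. i \<le> n \<Longrightarrow> k \<le> n \<Longrightarrow> matmul n M N i k = (if i = k then 1 else 0)"
    and x: "x \<in> vspace n" and zero: "\<And>l. l \<le> n \<Longrightarrow> vecmat n x M l = 0"
  shows "x = (\<lambda>_. 0)"
proof
  fix j
  show "x j = 0"
  proof (cases "j \<le> n")
    case False then show ?thesis using x by (simp add: vspace_def)
  next
    case True
    have "x j = (\<Sum>i\<le>n. x i * matmul n M N i j)"
      using True inv by (simp add: if_distrib[of "\<lambda>t. _ * t"] cong: if_cong)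
    also have "\<dots> = (\<Sum>l\<le>n. vecmat n x M l * N l j)" by (rule vecmat_matmul[OF True, symmetric])
    also have "\<dots> = 0" using zero by simp
    finally show ?thesis .
  qed
qed

lemma line0_invariant:
  fixes M :: "nat \<Rightarrow> nat \<Rightarrow> 'a::field"
  assumes inv: "matmul n M N 0 0 = 1" and row0: "\<And>j. 1 \<le> j \<Longrightarrow> j \<le> n \<Longrightarrow> M 0 j = 0"
  shows "{vecmat n x M | x. x \<in> range line0} = range line0"
proof -
  have "matmul n M N 0 0 = M 0 0 * N 0 0"
    unfolding matmul_def using row0 by (subst sum.mono_neutral_right[of "{..n}" "{0}"]) auto
  then have M00: "M 0 0 \<noteq> 0" using inv by auto
  have image: "vecmat n (line0 t) M = line0 (t * M 0 0)" for t
    using row0 by (auto simp: vecmat_def line0_def if_distrib[of "\<lambda>x. x * _"] cong: if_cong)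
  have "line0 s = vecmat n (line0 (s / M 0 0)) M" for s
    using image M00 by simp
  then show ?thesis using image by blast
qed

subsection \<open>The companion matrix and the minimal polynomial\<close>

lemma vec_companion:
  assumes "1 \<le> k" "k \<le> n"
  shows "(\<Sum>i\<le>n. z i * companion n q i k) =
         (if 2 \<le> k then z (k - 1) else 0) - z n * coeff q (k - 1)"
proof -
  have "(\<Sum>i\<le>n. z i * companion n q i k) =
     (\<Sum>i\<le>n. (if i = k - 1 then (if 2 \<le> k then z i else 0) else 0)
            + (if i = n then - (z i * coeff q (k - 1)) else 0))"
    using assms by (intro sum.cong) (auto simp: companion_def)
  also have "\<dots> = (if 2 \<le> k then z (k - 1) else 0) - z n * coeff q (k - 1)"
    using assms by (simp add: sum.distrib) linarith
  finally show ?thesis .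
qed

lemma companion_injective:
  fixes z :: "nat \<Rightarrow> 'a::field"
  assumes q0: "coeff q 0 \<noteq> 0" and n: "1 \<le> n" and z0: "z 0 = 0"
    and zero: "\<And>k. 1 \<le> k \<Longrightarrow> k \<le> n \<Longrightarrow> (\<Sum>i\<le>n. z i * companion n q i k) = 0"
    and i: "i \<le> n"
  shows "z i = 0"
proof -
  have zn: "z n = 0" using zero[of 1] n q0 vec_companion[of 1 n z q] by simp
  have "z (k - 1) = 0" if "2 \<le> k" "k \<le> n" for k
    using zero[of k] that zn vec_companion[of k n z q] by simp
  from this[of "i + 1"] show ?thesis using z0 zn i by (cases "i = 0 \<or> i = n") auto
qed

lemma primitive_elem_nonzero:
  fixes \<alpha> :: "'b::{field,finite}"
  assumes "primitive_elem \<alpha>" and "CARD('b) > 2"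
  shows "\<alpha> \<noteq> 0"
proof
  assume \<alpha>0: "\<alpha> = 0"
  have "\<not> (UNIV::'b set) \<subseteq> {0,1}"
  proof
    assume "(UNIV::'b set) \<subseteq> {0,1}"
    then have "CARD('b) \<le> card {0::'b,1}" by (intro card_mono) auto
    also have "\<dots> \<le> 2" by (simp add: card_insert_if)
    finally show False using assms(2) by simp
  qed
  then obtain y :: 'b where y: "y \<noteq> 0" "y \<noteq> 1" by blast
  with assms(1) obtain k where "y = \<alpha> ^ k" unfolding primitive_elem_def by blast
  with \<alpha>0 y show False by (cases k) auto
qed

lemma minpoly_coeff0_nonzero:
  assumes hom: "is_ring_hom \<phi>" and min: "is_minpoly \<phi> \<alpha> q" and \<alpha>: "\<alpha> \<noteq> 0"
  shows "coeff q 0 \<noteq> 0"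
proof
  assume "coeff q 0 = 0"
  then obtain r where q: "q = pCons 0 r" by (metis pCons_cases coeff_pCons_0)
  have "q \<noteq> 0" using min unfolding is_minpoly_def by auto
  then have r: "r \<noteq> 0" using q by auto
  have "\<phi> 0 = 0" using hom unfolding is_ring_hom_def by (metis add_cancel_right_right add_0)
  then have "map_poly \<phi> q = pCons 0 (map_poly \<phi> r)" using q by (simp add: map_poly_pCons)
  then have "poly (map_poly \<phi> r) \<alpha> = 0" using min \<alpha> unfolding is_minpoly_def by simp
  moreover have "degree q = Suc (degree r)" using q r by simp
  ultimately show False using min r unfolding is_minpoly_def by fastforce
qed

subsection \<open>The relation defining G on the subspace U\<close>

lemma fmap_on_U:
  assumes "x 0 = 0"
  shows "fmap n b c A x = (\<lambda>j k. if j = 0 \<and> 0 < k \<and> k \<le> n then (\<Sum>i\<le>n. x i * A i k) else 0)"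
  unfolding fmap_def f_basis_def using assms by (intro ext) (auto intro!: sum.cong sum.neutral)

lemma hat_v0_wedge:
  assumes "a < b'" "b' \<le> n"
  shows "hat n g (\<lambda>j k. if j = 0 \<and> 0 < k \<and> k \<le> n then s k else 0) a b' =
         g 0 a * (\<Sum>k\<in>{0<..n}. s k * g k b') - g 0 b' * (\<Sum>k\<in>{0<..n}. s k * g k a)"
proof -
  have "hat n g (\<lambda>j k. if j = 0 \<and> 0 < k \<and> k \<le> n then s k else 0) a b' =
        (\<Sum>j\<le>n. if j = 0 then (\<Sum>k\<in>{0<..n}. s k * wedge n (g 0) (g k) a b') else 0)"
    unfolding hat_def by (rule sum.cong) (auto intro!: sum.cong)
  also have "\<dots> = (\<Sum>k\<in>{0<..n}. s k * (g 0 a * g k b' - g 0 b' * g k a))"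
    using assms by (simp add: wedge_def)
  also have "\<dots> = g 0 a * (\<Sum>k\<in>{0<..n}. s k * g k b') - g 0 b' * (\<Sum>k\<in>{0<..n}. s k * g k a)"
    by (simp add: sum_distrib_left sum_subtractf algebra_simps)
  finally show ?thesis .
qed

lemma image_proportional_to_row0:
  fixes g A :: "nat \<Rightarrow> nat \<Rightarrow> 'a::field"
  assumes rel: "\<And>x. x \<in> vspace n \<Longrightarrow> fmap n b c A (vecmat n x g) = hat n g (fmap n b c A x)"
    and u: "u \<in> vspace n" "u 0 = 0" "vecmat n u g 0 = 0"
    and m: "1 \<le> m" "m \<le> n" "g 0 m \<noteq> 0"
  obtains \<mu> where "\<And>k. 1 \<le> k \<Longrightarrow> k \<le> n \<Longrightarrow> (\<Sum>i\<le>n. vecmat n u g i * A i k) = \<mu> * g 0 k"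
proof -
  define z where "z = vecmat n u g"
  define w where "w t = (\<Sum>k\<in>{0<..n}. (\<Sum>i\<le>n. u i * A i k) * g k t)" for t
  have lhs: "fmap n b c A z a b' = (if a = 0 \<and> 0 < b' \<and> b' \<le> n then (\<Sum>i\<le>n. z i * A i b') else 0)"
    for a b' using fmap_on_U[of z] u(3) z_def by simp
  have rhs: "fmap n b c A z a b' = g 0 a * w b' - g 0 b' * w a" if "a < b'" "b' \<le> n" for a b'
    using rel[OF u(1)] fmap_on_U[of u, OF u(2)] hat_v0_wedge[OF that]
    by (simp add: z_def w_def)
  text \<open>Off row 0 the left side vanishes, so w is proportional to v_0 g on U.\<close>
  have w_prop: "g 0 m * w k = g 0 k * w m" if "1 \<le> k" "k \<le> n" for k
    using lhs[of k m] rhs[of k m] lhs[of m k] rhs[of m k] that m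
    by (cases k m rule: linorder_cases) auto
  show ?thesis
  proof
    fix k assume k: "1 \<le> k" "k \<le> n"
    have "(\<Sum>i\<le>n. z i * A i k) = g 0 0 * w k - g 0 k * w 0" using lhs[of 0 k] rhs[of 0 k] k by simp
    also have "w k = g 0 k * w m / g 0 m" using w_prop[OF k] m(3) by (simp add: field_simps)
    finally show "(\<Sum>i\<le>n. vecmat n u g i * A i k) = (g 0 0 * w m / g 0 m - w 0) * g 0 k"
      unfolding z_def using m(3) by (simp add: field_simps)
  qed
qed

lemma preimage_of_U_at_most_line:
  fixes g N :: "nat \<Rightarrow> nat \<Rightarrow> 'a::field"
  assumes rel: "\<And>x. x \<in> vspace n \<Longrightarrow>
      fmap n b c (companion n q) (vecmat n x g) = hat n g (fmap n b c (companion n q) x)"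
    and inv: "\<And>i k. i \<le> n \<Longrightarrow> k \<le> n \<Longrightarrow> matmul n g N i k = (if i = k then 1 else 0)"
    and q0: "coeff q 0 \<noteq> 0" and m: "1 \<le> m" "m \<le> n" "g 0 m \<noteq> 0"
    and u1: "u1 \<in> vspace n" "u1 0 = 0" "vecmat n u1 g 0 = 0" "u1 \<noteq> (\<lambda>_. 0)"
    and u2: "u2 \<in> vspace n" "u2 0 = 0" "vecmat n u2 g 0 = 0"
  shows "\<exists>\<kappa>. u2 = (\<lambda>i. \<kappa> * u1 i)"
proof -
  let ?A = "companion n q"
  have kernel: "v = (\<lambda>_. 0)" if v: "v \<in> vspace n" "vecmat n v g 0 = 0"
      and vA: "\<And>k. 1 \<le> k \<Longrightarrow> k \<le> n \<Longrightarrow> (\<Sum>i\<le>n. vecmat n v g i * ?A i k) = 0" for v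
    using vecmat_injective[OF inv v(1)] companion_injective[OF q0 _ v(2) vA] m by force
  obtain \<mu>1 where \<mu>1: "\<And>k. 1 \<le> k \<Longrightarrow> k \<le> n \<Longrightarrow> (\<Sum>i\<le>n. vecmat n u1 g i * ?A i k) = \<mu>1 * g 0 k"
    using image_proportional_to_row0[OF rel u1(1-3) m] by blast
  obtain \<mu>2 where \<mu>2: "\<And>k. 1 \<le> k \<Longrightarrow> k \<le> n \<Longrightarrow> (\<Sum>i\<le>n. vecmat n u2 g i * ?A i k) = \<mu>2 * g 0 k"
    using image_proportional_to_row0[OF rel u2(1-3) m] by blast
  have "\<mu>1 \<noteq> 0" using kernel[OF u1(1,3)] \<mu>1 u1(4) by auto
  define v where "v = (\<lambda>i. \<mu>2 * u1 i - \<mu>1 * u2 i)"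
  have vg: "vecmat n v g = (\<lambda>j. \<mu>2 * vecmat n u1 g j - \<mu>1 * vecmat n u2 g j)"
    unfolding v_def by (rule vecmat_lincomb)
  have "v = (\<lambda>_. 0)"
  proof (rule kernel)
    show "v \<in> vspace n" using u1(1) u2(1) by (simp add: v_def vspace_def)
    show "vecmat n v g 0 = 0" using vg u1(3) u2(3) by simp
    fix k assume k: "1 \<le> k" "k \<le> n"
    have "(\<Sum>i\<le>n. vecmat n v g i * ?A i k) =
          \<mu>2 * (\<Sum>i\<le>n. vecmat n u1 g i * ?A i k) - \<mu>1 * (\<Sum>i\<le>n. vecmat n u2 g i * ?A i k)"
      unfolding vg by (simp add: left_diff_distrib sum_subtractf sum_distrib_left mult.assoc)
    then show "(\<Sum>i\<le>n. vecmat n v g i * ?A i k) = 0" using \<mu>1[OF k] \<mu>2[OF k] by simp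
  qed
  then have "u2 = (\<lambda>i. (\<mu>2 / \<mu>1) * u1 i)"
    using \<open>\<mu>1 \<noteq> 0\<close> by (intro ext) (auto simp: v_def fun_eq_iff field_simps)
  then show ?thesis by blast
qed

subsection \<open>A plane in the kernel of a linear form\<close>

definition vec123 :: "'a::comm_ring_1 \<Rightarrow> 'a \<Rightarrow> 'a \<Rightarrow> nat \<Rightarrow> 'a" where
  "vec123 a1 a2 a3 = (\<lambda>i. if i = 1 then a1 else if i = 2 then a2 else if i = 3 then a3 else 0)"

lemma vec123_form:
  assumes "3 \<le> n"
  shows "(\<Sum>i\<le>n. vec123 a1 a2 a3 i * h i) = a1 * h 1 + a2 * h 2 + a3 * h 3"
proof -
  have "(\<Sum>i\<le>n. vec123 a1 a2 a3 i * h i) = (\<Sum>i\<in>{1,2,3}. vec123 a1 a2 a3 i * h i)"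
    using assms by (intro sum.mono_neutral_right) (auto simp: vec123_def)
  then show ?thesis by (simp add: vec123_def)
qed

lemma plane_in_kernel:
  fixes h :: "nat \<Rightarrow> 'a::field"
  assumes n: "3 \<le> n"
  obtains u1 u2 where "u1 \<in> vspace n" "u1 0 = 0" "(\<Sum>i\<le>n. u1 i * h i) = 0" "u1 \<noteq> (\<lambda>_. 0)"
    and "u2 \<in> vspace n" "u2 0 = 0" "(\<Sum>i\<le>n. u2 i * h i) = 0" "\<forall>\<kappa>. u2 \<noteq> (\<lambda>i. \<kappa> * u1 i)"
proof -
  have in_U: "vec123 a1 a2 a3 \<in> vspace n" "vec123 a1 a2 a3 0 = 0" for a1 a2 a3 :: 'a
    using n by (auto simp: vspace_def vec123_def)
  have indep: "u \<noteq> (\<lambda>_. 0)" "\<forall>\<kappa>. u' \<noteq> (\<lambda>i. \<kappa> * u i)"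
    if "u s \<noteq> 0" "u t = 0" "u' t \<noteq> 0" for u u' :: "nat \<Rightarrow> 'a" and s t
    using that by (auto simp: fun_eq_iff) (metis mult_zero_right)
  consider "h 1 = 0" "h 2 = 0" | "h 1 = 0" "h 2 \<noteq> 0" | "h 1 \<noteq> 0" by blast
  then show ?thesis
  proof cases
    case 1
    with indep[of "vec123 1 0 0" 1 2 "vec123 0 1 0"] show ?thesis
      by (intro that[OF in_U _ _ in_U]) (simp_all only: vec123_form[OF n], simp_all add: vec123_def)
  next
    case 2
    with indep[of "vec123 1 0 0" 1 3 "vec123 0 (h 3) (- h 2)"] show ?thesis
      by (intro that[OF in_U _ _ in_U]) (simp_all only: vec123_form[OF n], simp_all add: vec123_def)
  next
    case 3
    with indep[of "vec123 (h 2) (- h 1) 0" 2 3 "vec123 (h 3) 0 (- h 1)"] show ?thesis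
      by (intro that[OF in_U _ _ in_U]) (simp_all only: vec123_form[OF n], simp_all add: vec123_def algebra_simps)
  qed
qed

theorem lemma3p2:
  fixes p n :: nat
    and b :: "nat \<Rightarrow> 'a::{field,finite}"
    and c :: "nat \<Rightarrow> nat \<Rightarrow> 'a"
    and q :: "'a poly"
    and \<phi> :: "'a \<Rightarrow> 'b::{field,finite}"
    and \<alpha> :: 'b
    and g :: "nat \<Rightarrow> nat \<Rightarrow> 'a"
  assumes "prime p" and "CARD('a) = p"
    and "n \<ge> 3"
    and "\<exists>i\<in>{1..n}. b i \<noteq> 0"
    and "\<exists>j k. 1 \<le> j \<and> j < k \<and> k \<le> n \<and> c j k \<noteq> 0"
    and "CARD('b) = p ^ n"
    and "is_ring_hom \<phi>"
    and "primitive_elem \<alpha>"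
    and "is_minpoly \<phi> \<alpha> q"
    and "g \<in> stabG n b c (companion n q)"
  shows "{vecmat n x g | x. x \<in> range line0} = range line0"
proof -
  have "(2::nat) < 2 ^ n" using power_strict_increasing[of 1 n "2::nat"] \<open>n \<ge> 3\<close> by simp
  also have "\<dots> \<le> p ^ n" using prime_ge_2_nat[OF \<open>prime p\<close>] by (intro power_mono) auto
  finally have q0: "coeff q 0 \<noteq> 0"
    using assms(6-9) primitive_elem_nonzero minpoly_coeff0_nonzero by metis
  obtain N where
    inv: "\<And>i k. i \<le> n \<Longrightarrow> k \<le> n \<Longrightarrow> matmul n g N i k = (if i = k then 1 else 0)" and
    rel: "\<And>x. x \<in> vspace n \<Longrightarrow>
      fmap n b c (companion n q) (vecmat n x g) = hat n g (fmap n b c (companion n q) x)"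
    using assms(10) unfolding stabG_def is_GL_def by blast
  have "g 0 m = 0" if m: "1 \<le> m" "m \<le> n" for m
  proof (rule ccontr)
    assume "g 0 m \<noteq> 0"
    obtain u1 u2 where "u1 \<in> vspace n" "u1 0 = 0" "vecmat n u1 g 0 = 0" "u1 \<noteq> (\<lambda>_. 0)"
      and "u2 \<in> vspace n" "u2 0 = 0" "vecmat n u2 g 0 = 0" "\<forall>\<kappa>. u2 \<noteq> (\<lambda>i. \<kappa> * u1 i)"
      using plane_in_kernel[OF \<open>n \<ge> 3\<close>, of "\<lambda>i. g i 0"] by (auto simp: vecmat_def)
    then show False using preimage_of_U_at_most_line[OF rel inv q0 m \<open>g 0 m \<noteq> 0\<close>] by blast
  qed
  then show ?thesis using line0_invariant[of n g N] inv[of 0 0] by simp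
qed

end
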